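(* With the notation of the context, the solution $x:[0,1]\to\mathbb{R}^{n_x}$ of the linear ODE $$\frac{dx}{d\lambda}=A(\lambda)x(\lambda)+b(\lambda),\qquad x(0)=x_0,$$ satisfies $x(1)=\Phi(1,0)x_0+E\,c$, where $\Phi(1,0)=I+E\,\Omega F^\top$ with $\Omega=\mathrm{diag}(\omega_i)$, $\omega_i=\big((1+\alpha_i)^{-1/2}-1\big)/\alpha_i$, and $c\in\mathbb{R}^{n_z}$ has entries $$c_i=\frac{\alpha_i\tilde z_i+\tilde x_i\big(1-\sqrt{1+\alpha_i}\big)}{\alpha_i(1+\alpha_i)}.$$ Moreover $b(\mu)=E\beta(\mu)$ with $\beta_i(\mu)=\dfrac{\tilde z_i(1+\tfrac12\mu\alpha_i)-\tfrac12\tilde x_i}{(1+\mu\alpha_i)^2}$.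
   Context: $P\in\mathbb{R}^{n_x\times n_x}$, $R\in\mathbb{R}^{n_z\times n_z}$ symmetric positive definite, $H\in\mathbb{R}^{n_z\times n_x}$ of full row rank, $\bar x\in\mathbb{R}^{n_x}$ (prior mean), $z\in\mathbb{R}^{n_z}$ (observation). $R^{-1/2}$ is the inverse of the symmetric positive definite square root of $R$. The EDH flow is defined by $A(\lambda)=-\tfrac12 PH^\top(\lambda HPH^\top+R)^{-1}H$ and $b(\lambda)=(I+2\lambda A(\lambda))\big[(I+\lambda A(\lambda))PH^\top R^{-1}z+A(\lambda)\bar x\big]$. Let $D=R^{-1/2}HPH^\top R^{-1/2}=V\Lambda V^\top$ with $V$ orthogonal and $\Lambda=\mathrm{diag}(\alpha_1,\dots,\alpha_{n_z})$, $\alpha_i>0$. Define $E=PH^\top R^{-1/2}V$, $F^\top=V^\top R^{-1/2}H$, $\tilde z=V^\top R^{-1/2}z$, $\tilde x=F^\top\bar x$. *)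

theory Defs
  imports "HOL-Analysis.Analysis"
begin

definition spd :: "real^'n^'n \<Rightarrow> bool" where
  "spd M \<longleftrightarrow> transpose M = M \<and> (\<forall>v. v \<noteq> 0 \<longrightarrow> 0 < v \<bullet> (M *v v))"

definition spd_sqrt :: "real^'n^'n \<Rightarrow> real^'n^'n" where
  "spd_sqrt M = (THE S. spd S \<and> S ** S = M)"

definition inv_sqrt :: "real^'n^'n \<Rightarrow> real^'n^'n" where
  "inv_sqrt M = matrix_inv (spd_sqrt M)"

definition diag_mat :: "real^'n \<Rightarrow> real^'n^'n" where
  "diag_mat a = (\<chi> i j. if i = j then a $ i else 0)"

definition EDH_A :: "real^'nx^'nx \<Rightarrow> real^'nz^'nz \<Rightarrow> real^'nx^'nz \<Rightarrow> real \<Rightarrow> real^'nx^'nx" where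
  "EDH_A P R H l = (- (1/2)) *\<^sub>R (P ** transpose H ** matrix_inv (l *\<^sub>R (H ** P ** transpose H) + R) ** H)"

definition EDH_b :: "real^'nx^'nx \<Rightarrow> real^'nz^'nz \<Rightarrow> real^'nx^'nz \<Rightarrow> real^'nx \<Rightarrow> real^'nz \<Rightarrow> real \<Rightarrow> real^'nx" where
  "EDH_b P R H xbar z l =
     (mat 1 + (2 * l) *\<^sub>R EDH_A P R H l) *v
       ((mat 1 + l *\<^sub>R EDH_A P R H l) ** P ** transpose H ** matrix_inv R *v z
        + EDH_A P R H l *v xbar)"

end

(* Whitening by R^(-1/2) and rotating by V decouples the flow.  With Lambda = diag alpha one has
   F^T E = Lambda and (l H P H^T + R)^(-1) = R^(-1/2) V (I + l Lambda)^(-1) V^T R^(-1/2), so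
   A(l) = -(1/2) E (I + l Lambda)^(-1) F^T and b(l) = E beta(l).  Hence x' always lies in the range
   of E, which makes x - E Lambda^(-1) F^T x constant, and x(1) is determined by the coordinates
   w_i = (F^T x)_i.  Each of them solves the scalar linear equation
   w' = alpha_i (beta_i(l) - w / (2 (1 + l alpha_i))), which is integrated in closed form.
   The square root R^(1/2) behind all this comes from the spectral theorem for symmetric
   matrices, obtained by maximising the Rayleigh quotient. *)

theory Submission
  imports Defs
begin

section \<open>Spectral theorem for symmetric matrices\<close>

lemma inner_matrix_vector_symmetric:
  fixes A :: "real^'n^'n"
  assumes "transpose A = A"
  shows "x \<bullet> (A *v y) = (A *v x) \<bullet> y"
proof -
  have "x \<bullet> (A *v y) = (x v* A) \<bullet> y" by (simp add: dot_lmul_matrix)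
  also have "x v* A = transpose A *v x" by simp
  finally show ?thesis using assms by simp
qed

lemma linear_coeff_zero_if_quadratic_nonpos:
  fixes c d :: real
  assumes "\<And>t. 2 * t * c + t\<^sup>2 * d \<le> 0"
  shows "c = 0"
proof -
  define k where "k = \<bar>d\<bar> + 1"
  have k: "k > 0" "2 * k + d > 0" unfolding k_def by auto
  have "2 * (c / k) * c + (c / k)\<^sup>2 * d = c\<^sup>2 * (2 * k + d) / k\<^sup>2"
    using k by (simp add: field_simps power2_eq_square)
  then have "c\<^sup>2 * (2 * k + d) \<le> 0"
    using assms[of "c / k"] k by (simp add: divide_le_0_iff)
  then have "c\<^sup>2 \<le> 0" using k by (simp add: mult_le_0_iff)
  then show ?thesis by simp
qed

lemma rayleigh_maximizer_is_eigenvector: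
  fixes A :: "real^'n^'n"
  assumes sym: "transpose A = A" and W: "subspace W" and inv: "\<forall>v\<in>W. A *v v \<in> W"
    and u: "u \<in> W" "u \<bullet> u = 1"
    and max: "\<And>v. v \<in> W \<Longrightarrow> v \<bullet> (A *v v) \<le> (u \<bullet> (A *v u)) * (v \<bullet> v)"
  shows "A *v u = (u \<bullet> (A *v u)) *\<^sub>R u"
proof -
  define \<mu> where "\<mu> = u \<bullet> (A *v u)"
  \<comment> \<open>perturbing u inside W along the residual w gives 2 t |w|^2 + O(t^2) \<le> 0 for all t\<close>
  define w where "w = A *v u - \<mu> *\<^sub>R u"
  have wW: "w \<in> W" unfolding w_def using inv u W by (simp add: subspace_diff subspace_scale)
  have wu: "w \<bullet> u = 0"
    unfolding w_def using u(2) by (simp add: \<mu>_def inner_diff_left inner_diff_right inner_commute)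
  have wAu: "w \<bullet> (A *v u) = w \<bullet> w"
    using wu by (simp add: w_def inner_diff_right inner_commute)
  have uAw: "u \<bullet> (A *v w) = w \<bullet> w"
    using wAu inner_matrix_vector_symmetric[OF sym, of u w] by (simp add: inner_commute)
  have "2 * t * (w \<bullet> w) + t\<^sup>2 * (w \<bullet> (A *v w) - \<mu> * (w \<bullet> w)) \<le> 0" for t
  proof -
    let ?v = "u + t *\<^sub>R w"
    have "?v \<bullet> (A *v ?v) \<le> \<mu> * (?v \<bullet> ?v)"
      using max[of ?v] u wW W unfolding \<mu>_def by (simp add: subspace_add subspace_scale)
    moreover have "?v \<bullet> (A *v ?v) = \<mu> + 2 * t * (w \<bullet> w) + t\<^sup>2 * (w \<bullet> (A *v w))"
      by (simp add: matrix_vector_right_distrib matrix_vector_mult_scaleR inner_add_left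
          inner_add_right \<mu>_def wAu uAw power2_eq_square algebra_simps)
    moreover have "?v \<bullet> ?v = 1 + t\<^sup>2 * (w \<bullet> w)"
      using wu u(2) by (simp add: inner_add_left inner_add_right inner_commute power2_eq_square)
    ultimately have "\<mu> + 2 * t * (w \<bullet> w) + t\<^sup>2 * (w \<bullet> (A *v w)) \<le> \<mu> * (1 + t\<^sup>2 * (w \<bullet> w))"
      by (metis (no_types, lifting))
    then show ?thesis by (simp add: algebra_simps)
  qed
  then have "w \<bullet> w = 0" by (rule linear_coeff_zero_if_quadratic_nonpos)
  then show ?thesis by (simp add: w_def \<mu>_def)
qed

lemma symmetric_matrix_eigenvector_in_invariant_subspace:
  fixes A :: "real^'n^'n"
  assumes sym: "transpose A = A" and W: "subspace W" and nz: "W \<noteq> {0}"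
    and inv: "\<forall>v\<in>W. A *v v \<in> W"
  obtains u where "u \<in> W" "u \<bullet> u = 1" "A *v u = (u \<bullet> (A *v u)) *\<^sub>R u"
proof -
  define K where "K = W \<inter> sphere 0 1"
  have "compact K" using closed_subspace[OF W] unfolding K_def by (simp add: closed_Int_compact)
  obtain w where "w \<in> W" "w \<noteq> 0" using nz W subspace_0 by blast
  then have "w /\<^sub>R norm w \<in> K" using W unfolding K_def by (simp add: subspace_scale)
  then have "K \<noteq> {}" by blast
  moreover have "continuous_on K (\<lambda>v. v \<bullet> (A *v v))"
    by (intro continuous_intros linear_continuous_on) (auto intro: linear_linear)
  ultimately obtain u where "u \<in> K" and umax: "\<And>y. y \<in> K \<Longrightarrow> y \<bullet> (A *v y) \<le> u \<bullet> (A *v u)"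
    using continuous_attains_sup[OF \<open>compact K\<close>] by blast
  then have uW: "u \<in> W" and uu: "u \<bullet> u = 1" unfolding K_def by (auto simp: norm_eq_1)
  have "v \<bullet> (A *v v) \<le> (u \<bullet> (A *v u)) * (v \<bullet> v)" if "v \<in> W" for v
  proof (cases "v = 0")
    case False
    let ?y = "v /\<^sub>R norm v"
    have "(v \<bullet> (A *v v)) / (norm v)\<^sup>2 = ?y \<bullet> (A *v ?y)"
      by (simp add: matrix_vector_mult_scaleR power2_eq_square field_simps)
    also have "\<dots> \<le> u \<bullet> (A *v u)"
      using that False W by (intro umax) (simp add: K_def subspace_scale)
    finally show ?thesis using False by (simp add: divide_le_eq power2_norm_eq_inner mult.commute)
  qed simp
  then show thesis
    using that uW uu rayleigh_maximizer_is_eigenvector[OF sym W inv uW uu] by blast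
qed

lemma span_insert_orthogonal_complement:
  assumes W: "subspace W" and u: "u \<in> W" "u \<bullet> u = 1"
    and B: "span B = {v \<in> W. u \<bullet> v = 0}"
  shows "span (insert u B) = W"
proof
  have "insert u B \<subseteq> W" using u span_superset[of B] by (auto simp: B)
  then show "span (insert u B) \<subseteq> W" using W by (rule span_minimal)
  show "W \<subseteq> span (insert u B)"
  proof
    fix v assume "v \<in> W"
    then have "v - (u \<bullet> v) *\<^sub>R u \<in> span B"
      using u W by (auto simp: B subspace_diff subspace_scale inner_diff_right)
    then have "(v - (u \<bullet> v) *\<^sub>R u) + (u \<bullet> v) *\<^sub>R u \<in> span (insert u B)"
      by (meson span_add span_base span_mono span_scale insertI1 subset_insertI subsetD)
    then show "v \<in> span (insert u B)" by simp
  qed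
qed

lemma symmetric_matrix_orthonormal_eigenbasis_of_subspace:
  fixes A :: "real^'n^'n"
  assumes sym: "transpose A = A"
  shows "subspace W \<Longrightarrow> (\<forall>v\<in>W. A *v v \<in> W) \<Longrightarrow>
    \<exists>B. finite B \<and> B \<subseteq> W \<and> pairwise orthogonal B \<and>
        (\<forall>b\<in>B. b \<bullet> b = 1 \<and> A *v b = (b \<bullet> (A *v b)) *\<^sub>R b) \<and> span B = W"
proof (induction "dim W" arbitrary: W rule: less_induct)
  case less
  show ?case
  proof (cases "W = {0}")
    case True
    then show ?thesis by (intro exI[of _ "{}"]) auto
  next
    case False
    obtain u where uW: "u \<in> W" and uu: "u \<bullet> u = 1" and eu: "A *v u = (u \<bullet> (A *v u)) *\<^sub>R u"
      using symmetric_matrix_eigenvector_in_invariant_subspace[OF sym less.prems(1) False less.prems(2)] .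
    define W' where "W' = {v \<in> W. u \<bullet> v = 0}"
    have sW': "subspace W'"
      using less.prems(1) unfolding W'_def subspace_def by (auto simp: inner_add_right)
    have iW': "\<forall>v\<in>W'. A *v v \<in> W'"
    proof
      fix v assume v: "v \<in> W'"
      have "u \<bullet> (A *v v) = (A *v u) \<bullet> v" by (rule inner_matrix_vector_symmetric[OF sym])
      also have "\<dots> = 0" using v unfolding W'_def by (subst eu) simp
      finally show "A *v v \<in> W'" using v less.prems(2) unfolding W'_def by auto
    qed
    have "u \<notin> W'" using uu unfolding W'_def by simp
    then have "W' \<subset> W" using uW unfolding W'_def by blast
    then have "dim W' < dim W"
      using sW' less.prems(1) by (metis dim_psubset span_eq_iff)
    from less.hyps[OF this sW' iW'] obtain B where B: "finite B" "B \<subseteq> W'" "pairwise orthogonal B"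
      "\<forall>b\<in>B. b \<bullet> b = 1 \<and> A *v b = (b \<bullet> (A *v b)) *\<^sub>R b" "span B = W'" by blast
    have "orthogonal u b" "orthogonal b u" if "b \<in> B" for b
      using that B(2) unfolding W'_def orthogonal_def by (auto simp: inner_commute)
    then have "pairwise orthogonal (insert u B)"
      using B(3) by (auto simp: pairwise_insert)
    moreover have "span (insert u B) = W"
      using span_insert_orthogonal_complement[OF less.prems(1) uW uu] B(5) unfolding W'_def .
    ultimately show ?thesis
      using B uW uu eu unfolding W'_def by (intro exI[of _ "insert u B"]) auto
  qed
qed

lemma symmetric_matrix_orthonormal_eigenbasis:
  fixes A :: "real^'n^'n"
  assumes "transpose A = A"
  obtains B where "finite B"
    "\<And>b b'. b \<in> B \<Longrightarrow> b' \<in> B \<Longrightarrow> b \<bullet> b' = (if b = b' then 1 else 0)"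
    "\<And>b. b \<in> B \<Longrightarrow> A *v b = (b \<bullet> (A *v b)) *\<^sub>R b"
    "\<And>v. (\<Sum>b\<in>B. (v \<bullet> b) *\<^sub>R b) = v"
proof -
  obtain B where B: "finite B" "pairwise orthogonal B"
      "\<forall>b\<in>B. b \<bullet> b = 1 \<and> A *v b = (b \<bullet> (A *v b)) *\<^sub>R b" "span B = UNIV"
    using symmetric_matrix_orthonormal_eigenbasis_of_subspace[OF assms, of UNIV] by auto
  have "b \<bullet> b' = (if b = b' then 1 else 0)" if "b \<in> B" "b' \<in> B" for b b'
    using B(2,3) that unfolding pairwise_def orthogonal_def by auto
  moreover have "(\<Sum>b\<in>B. (v \<bullet> b) *\<^sub>R b) = v" for v
    using orthonormal_basis_expand[OF B(2) _ _ B(1), of v] B(3,4) by (simp add: norm_eq_1)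
  ultimately show thesis using that B by blast
qed

section \<open>Square roots of positive definite matrices\<close>

lemma orthonormal_expansion_weighted_squares_pos:
  fixes v :: "'a::real_inner"
  assumes "finite B" and expand: "(\<Sum>b\<in>B. (v \<bullet> b) *\<^sub>R b) = v"
    and pos: "\<And>b. b \<in> B \<Longrightarrow> 0 < f b" and "v \<noteq> 0"
  shows "0 < (\<Sum>b\<in>B. f b * (b \<bullet> v)\<^sup>2)"
proof -
  obtain b where "b \<in> B" "b \<bullet> v \<noteq> 0"
    using expand \<open>v \<noteq> 0\<close> by (metis (no_types, lifting) inner_commute scale_eq_0_iff sum.neutral)
  moreover have "0 \<le> f b' * (b' \<bullet> v)\<^sup>2" if "b' \<in> B" for b'
    using pos[OF that] by simp
  ultimately show ?thesis
    using \<open>finite B\<close> pos by (intro sum_pos2[of B b]) auto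
qed

definition spectral_matrix :: "(real^'n) set \<Rightarrow> (real^'n \<Rightarrow> real) \<Rightarrow> real^'n^'n" where
  "spectral_matrix B f = (\<chi> i j. \<Sum>b\<in>B. f b * b $ i * b $ j)"

lemma spectral_matrix_mult: "spectral_matrix B f *v v = (\<Sum>b\<in>B. (f b * (b \<bullet> v)) *\<^sub>R b)"
  by (simp add: spectral_matrix_def vec_eq_iff matrix_vector_mult_def inner_vec_def
      sum_distrib_left sum_distrib_right sum.swap[of _ B UNIV] mult_ac)

lemma transpose_spectral_matrix: "transpose (spectral_matrix B f) = spectral_matrix B f"
  by (simp add: spectral_matrix_def vec_eq_iff transpose_def mult_ac)

lemma spd_sqrt_exists:
  fixes R :: "real^'n^'n"
  assumes R: "spd R"
  shows "\<exists>S. spd S \<and> S ** S = R"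
proof -
  obtain B where B: "finite B"
      "\<And>b b'. b \<in> B \<Longrightarrow> b' \<in> B \<Longrightarrow> b \<bullet> b' = (if b = b' then 1 else 0)"
      "\<And>b. b \<in> B \<Longrightarrow> R *v b = (b \<bullet> (R *v b)) *\<^sub>R b"
      "\<And>v. (\<Sum>b\<in>B. (v \<bullet> b) *\<^sub>R b) = v"
    using symmetric_matrix_orthonormal_eigenbasis[of R] R unfolding spd_def by blast
  define lam where "lam b = b \<bullet> (R *v b)" for b
  have R_mult: "R *v b = lam b *\<^sub>R b" if "b \<in> B" for b
    using B(3)[OF that] unfolding lam_def .
  have lam_pos: "0 < lam b" if "b \<in> B" for b
  proof -
    have "b \<noteq> 0" using B(2)[OF that that] by auto
    then show ?thesis using R unfolding spd_def lam_def by blast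
  qed
  define S where "S = spectral_matrix B (\<lambda>b. sqrt (lam b))"
  have S_mult: "S *v v = (\<Sum>b\<in>B. (sqrt (lam b) * (b \<bullet> v)) *\<^sub>R b)" for v
    unfolding S_def by (rule spectral_matrix_mult)
  have inner_S_mult: "b \<bullet> (S *v v) = sqrt (lam b) * (b \<bullet> v)" if "b \<in> B" for b v
  proof -
    have "b \<bullet> (S *v v) = (\<Sum>b'\<in>B. if b' = b then sqrt (lam b') * (b' \<bullet> v) else 0)"
      unfolding S_mult inner_sum_right using B(2) that by (intro sum.cong) auto
    then show ?thesis using B(1) that by simp
  qed
  have "transpose S = S"
    unfolding S_def by (rule transpose_spectral_matrix)
  moreover have "0 < v \<bullet> (S *v v)" if "v \<noteq> 0" for v
  proof -
    have "v \<bullet> (S *v v) = (\<Sum>b\<in>B. sqrt (lam b) * (b \<bullet> v)\<^sup>2)"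
      unfolding S_mult by (simp add: inner_sum_right inner_commute power2_eq_square mult_ac)
    then show ?thesis
      using orthonormal_expansion_weighted_squares_pos[OF B(1) B(4)] lam_pos that by simp
  qed
  moreover have "S ** S = R"
  proof -
    have "(S ** S) *v v = R *v v" for v
    proof -
      have "(S ** S) *v v = (\<Sum>b\<in>B. (lam b * (v \<bullet> b)) *\<^sub>R b)"
        unfolding matrix_vector_mul_assoc[symmetric] S_mult[of "S *v v"] using lam_pos
        by (intro sum.cong) (auto simp: inner_S_mult inner_commute real_sqrt_mult[symmetric] abs_of_pos)
      also have "\<dots> = R *v (\<Sum>b\<in>B. (v \<bullet> b) *\<^sub>R b)"
        by (simp add: linear_sum[OF matrix_vector_mul_linear] o_def matrix_vector_mult_scaleR
            R_mult mult.commute)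
      finally show ?thesis by (simp add: B(4))
    qed
    then show ?thesis by (simp add: matrix_eq)
  qed
  ultimately show ?thesis unfolding spd_def by blast
qed

lemma spd_sqrt_unique:
  fixes S1 S2 :: "real^'n^'n"
  assumes S1: "spd S1" and S2: "spd S2" and eq: "S1 ** S1 = S2 ** S2"
  shows "S1 = S2"
proof -
  define T where "T = S1 - S2"
  have symT: "transpose T = T"
    using S1 S2 unfolding spd_def T_def by (simp add: vec_eq_iff transpose_def)
  obtain B where B: "finite B"
      "\<And>b b'. b \<in> B \<Longrightarrow> b' \<in> B \<Longrightarrow> b \<bullet> b' = (if b = b' then 1 else 0)"
      "\<And>b. b \<in> B \<Longrightarrow> T *v b = (b \<bullet> (T *v b)) *\<^sub>R b"
      "\<And>v. (\<Sum>b\<in>B. (v \<bullet> b) *\<^sub>R b) = v"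
    using symmetric_matrix_orthonormal_eigenbasis[OF symT] by blast
  have T_mult: "T *v v = S1 *v v - S2 *v v" for v
    unfolding T_def by (simp add: matrix_vector_mult_diff_rdistrib)
  have "T *v b = 0" if b: "b \<in> B" for b
  proof -
    define \<mu> where "\<mu> = b \<bullet> (T *v b)"
    have Tb: "T *v b = \<mu> *\<^sub>R b" unfolding \<mu>_def by (rule B(3)[OF b])
    have "S1 *v (T *v b) + T *v (S2 *v b) = (S1 ** S1) *v b - (S2 ** S2) *v b"
      unfolding T_mult by (simp add: matrix_vector_mult_diff_distrib matrix_vector_mul_assoc)
    then have "b \<bullet> (S1 *v (T *v b) + T *v (S2 *v b)) = 0" using eq by simp
    then have "b \<bullet> (S1 *v (T *v b)) + (T *v b) \<bullet> (S2 *v b) = 0"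
      using inner_matrix_vector_symmetric[OF symT, of b "S2 *v b"] by (simp add: inner_add_right)
    then have "\<mu> * (b \<bullet> (S1 *v b) + b \<bullet> (S2 *v b)) = 0"
      by (simp add: Tb matrix_vector_mult_scaleR algebra_simps)
    moreover have "b \<noteq> 0" using B(2)[OF b b] by auto
    then have "0 < b \<bullet> (S1 *v b) + b \<bullet> (S2 *v b)"
      using S1 S2 unfolding spd_def by (simp add: add_pos_pos)
    ultimately show ?thesis using Tb by simp
  qed
  then have "T *v v = 0" for v
    using B(4)[of v] by (metis (no_types, lifting) linear_sum[OF matrix_vector_mul_linear]
        matrix_vector_mult_scaleR scaleR_zero_right sum.neutral)
  then show ?thesis by (simp add: T_mult matrix_eq)
qed

lemma
  fixes R :: "real^'n^'n"
  assumes "spd R"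
  shows spd_spd_sqrt: "spd (spd_sqrt R)"
    and spd_sqrt_mult_self: "spd_sqrt R ** spd_sqrt R = R"
proof -
  obtain S where S: "spd S" "S ** S = R" using spd_sqrt_exists[OF assms] by blast
  have "spd_sqrt R = S"
    unfolding spd_sqrt_def using S spd_sqrt_unique by (intro the_equality) auto
  then show "spd (spd_sqrt R)" "spd_sqrt R ** spd_sqrt R = R" using S by simp_all
qed

lemma matrix_inv_eqI:
  fixes A B :: "real^'n^'n"
  assumes "A ** B = mat 1"
  shows "matrix_inv A = B"
proof -
  have "B ** A = mat 1" using assms matrix_left_right_inverse by blast
  then have inv: "A ** matrix_inv A = mat 1 \<and> matrix_inv A ** A = mat 1"
    unfolding matrix_inv_def using assms
    by (intro someI_ex[of "\<lambda>A'. A ** A' = mat 1 \<and> A' ** A = mat 1"]) blast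
  have "matrix_inv A = matrix_inv A ** (A ** B)" using assms by simp
  also have "\<dots> = (matrix_inv A ** A) ** B" by (rule matrix_mul_assoc)
  also have "\<dots> = B" using inv by simp
  finally show ?thesis .
qed

lemma spd_right_inverse:
  fixes S :: "real^'n^'n"
  assumes "spd S"
  obtains C where "S ** C = mat 1"
proof -
  have "\<forall>x. S *v x = 0 \<longrightarrow> x = 0"
    using assms unfolding spd_def by (metis inner_zero_right less_irrefl)
  then obtain C where "C ** S = mat 1" using matrix_left_invertible_ker by blast
  then show thesis using that matrix_left_right_inverse by blast
qed

lemma
  fixes R :: "real^'n^'n"
  assumes R: "spd R"
  shows spd_sqrt_mult_inv_sqrt: "spd_sqrt R ** inv_sqrt R = mat 1"
    and inv_sqrt_mult_spd_sqrt: "inv_sqrt R ** spd_sqrt R = mat 1"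
    and matrix_inv_eq_inv_sqrt_square: "matrix_inv R = inv_sqrt R ** inv_sqrt R"
proof -
  obtain C where C: "spd_sqrt R ** C = mat 1" using spd_right_inverse[OF spd_spd_sqrt[OF R]] .
  then have Sm: "inv_sqrt R = C" unfolding inv_sqrt_def by (rule matrix_inv_eqI)
  show "spd_sqrt R ** inv_sqrt R = mat 1" using C Sm by simp
  then show "inv_sqrt R ** spd_sqrt R = mat 1" using matrix_left_right_inverse by blast
  have "R ** (C ** C) = (spd_sqrt R ** spd_sqrt R) ** (C ** C)"
    using spd_sqrt_mult_self[OF R] by simp
  also have "\<dots> = spd_sqrt R ** (spd_sqrt R ** C) ** C" by (simp add: matrix_mul_assoc)
  also have "\<dots> = mat 1" using C by simp
  finally show "matrix_inv R = inv_sqrt R ** inv_sqrt R" unfolding Sm by (rule matrix_inv_eqI)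
qed

section \<open>A scalar linear equation\<close>

lemma has_real_derivative_sqrt_affine:
  fixes a l :: real
  assumes "0 < 1 + l * a"
  shows "((\<lambda>l. sqrt (1 + l * a)) has_real_derivative a / (2 * sqrt (1 + l * a))) (at l within S)"
  using assms by (auto intro!: derivative_eq_intros simp: field_simps)

(* sqrt (1 + l a) (w - Z) has derivative a (Z - X) / (2 (1 + l a)^(3/2)),
   which is cancelled by the derivative of (Z - X) / sqrt (1 + l a) *)
lemma edh_scalar_first_integral:
  fixes a l Z X :: real and w :: "real \<Rightarrow> real"
  assumes pos: "0 < 1 + l * a"
    and dw: "(w has_real_derivative
               a * ((Z * (1 + l * a / 2) - X / 2) / (1 + l * a)\<^sup>2 - w l / (2 * (1 + l * a))))
             (at l within S)"
  shows "((\<lambda>l. sqrt (1 + l * a) * (w l - Z) + (Z - X) / sqrt (1 + l * a)) has_real_derivative 0)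
           (at l within S)"
proof -
  define s where "s = sqrt (1 + l * a)"
  have s: "0 < s" "l * a = s\<^sup>2 - 1" unfolding s_def using pos by auto
  define w' where "w' = a * ((Z * (1 + l * a / 2) - X / 2) / (1 + l * a)\<^sup>2 - w l / (2 * (1 + l * a)))"
  note ds = has_real_derivative_sqrt_affine[OF pos, of S, folded s_def]
  have "((\<lambda>l. sqrt (1 + l * a) * (w l - Z) + (Z - X) * inverse (sqrt (1 + l * a)))
          has_real_derivative s * w' + a / (2 * s) * (w l - Z) + (Z - X) * - (inverse s * (a / (2 * s)) * inverse s))
        (at l within S)"
    using DERIV_add[OF DERIV_mult'[OF ds DERIV_diff[OF dw[folded w'_def] DERIV_const]]
        DERIV_cmult[OF DERIV_inverse'[OF ds], of "Z - X"]] s(1) unfolding s_def by simp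
  moreover have "s * w' + a / (2 * s) * (w l - Z) + (Z - X) * - (inverse s * (a / (2 * s)) * inverse s) = 0"
    unfolding w'_def s(2) using s(1) by (simp add: field_simps power2_eq_square)
  ultimately show ?thesis by (simp only: divide_inverse)
qed

lemma edh_scalar_endpoint:
  fixes a Z X :: real and w :: "real \<Rightarrow> real"
  assumes a: "0 < a"
    and dw: "\<And>l. l \<in> {0..1} \<Longrightarrow> (w has_real_derivative
               a * ((Z * (1 + l * a / 2) - X / 2) / (1 + l * a)\<^sup>2 - w l / (2 * (1 + l * a))))
             (at l within {0..1})"
  shows "(w 1 - w 0) / a
           = (1 / sqrt (1 + a) - 1) / a * w 0 + (a * Z + X * (1 - sqrt (1 + a))) / (a * (1 + a))"
proof -
  define h where "h l = sqrt (1 + l * a) * (w l - Z) + (Z - X) / sqrt (1 + l * a)" for l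
  have "(h has_real_derivative 0) (at l within {0..1})" if "l \<in> {0..1}" for l
    unfolding h_def using a that by (intro edh_scalar_first_integral dw) (auto intro: add_pos_nonneg)
  then obtain K where "\<forall>l\<in>{0..1}. h l = K"
    using has_field_derivative_zero_constant[of "{0..1}" h] by auto
  then have "h 1 = h 0" by simp
  define s where "s = sqrt (1 + a)"
  have s: "0 < s" "a = s\<^sup>2 - 1" unfolding s_def using a by auto
  have "s * (w 1 - Z) + (Z - X) / s = w 0 - X"
    using \<open>h 1 = h 0\<close> unfolding h_def s_def by simp
  then have "s * (w 1 - Z) = w 0 - X - (Z - X) / s" by linarith
  then have "w 1 - Z = (w 0 - X - (Z - X) / s) / s"
    using s(1) by (metis less_irrefl nonzero_mult_div_cancel_left)
  then have w1: "w 1 = Z + (w 0 - X - (Z - X) / s) / s" by linarith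
  have "w 1 - w 0 = (1 / s - 1) * w 0 + (Z - X / s - (Z - X) / s\<^sup>2)"
    unfolding w1 using s(1) by (simp add: field_simps power2_eq_square)
  also have "Z - X / s - (Z - X) / s\<^sup>2 = (a * Z + X * (1 - s)) / (1 + a)"
    unfolding s(2) using s(1) by (simp add: field_simps power2_eq_square)
  finally have "(w 1 - w 0) / a = (1 / s - 1) * w 0 / a + (a * Z + X * (1 - s)) / (1 + a) / a"
    by (simp add: add_divide_distrib)
  then show ?thesis unfolding s_def by (simp add: divide_divide_eq_left mult.commute)
qed

section \<open>The EDH flow in eigencoordinates\<close>

lemma has_vector_derivative_increment_in_range:
  fixes E :: "real^'m^'n" and L :: "real^'n^'m" and x :: "real \<Rightarrow> real^'n"
  assumes LE: "L ** E = mat 1" and "a \<le> b"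
    and dx: "\<And>l. l \<in> {a..b} \<Longrightarrow> (x has_vector_derivative E *v q l) (at l within {a..b})"
  shows "x b - x a = E *v (L *v (x b - x a))"
proof -
  have "((\<lambda>l. x l - E *v (L *v x l)) has_vector_derivative 0) (at l within {a..b})"
    if "l \<in> {a..b}" for l
  proof -
    have "((\<lambda>l. x l - E *v (L *v x l)) has_vector_derivative E *v q l - E *v (L *v (E *v q l)))
            (at l within {a..b})"
      by (intro has_vector_derivative_diff dx[OF that] bounded_linear.has_vector_derivative[OF
            matrix_vector_mul_bounded_linear])
    then show ?thesis by (simp add: matrix_vector_mul_assoc LE)
  qed
  then obtain K where "\<And>l. l \<in> {a..b} \<Longrightarrow> x l - E *v (L *v x l) = K"
    using has_vector_derivative_zero_constant[of "{a..b}" "\<lambda>l. x l - E *v (L *v x l)"] by auto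
  then have "x b - E *v (L *v x b) = x a - E *v (L *v x a)" using \<open>a \<le> b\<close> by simp
  then show ?thesis by (simp add: matrix_vector_mult_diff_distrib algebra_simps)
qed

lemma diag_mat_mult_vec [simp]: "diag_mat a *v x = (\<chi> i. a $ i * x $ i)"
  by (simp add: diag_mat_def matrix_vector_mult_def vec_eq_iff if_distrib if_distribR cong: if_cong)

(* keep transpose V *v y in this form, so that the cancellation rules below can fire *)
declare transpose_matrix_vector [simp del]

locale edh_eigencoordinates =
  fixes P :: "real^'nx^'nx" and R :: "real^'nz^'nz" and H :: "real^'nx^'nz"
    and V :: "real^'nz^'nz" and \<alpha> :: "real^'nz"
  assumes spd_R: "spd R"
    and orthogonal_V: "orthogonal_matrix V"
    and eigendecomposition:
      "inv_sqrt R ** H ** P ** transpose H ** inv_sqrt R = V ** diag_mat \<alpha> ** transpose V"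
    and eigenvalues_pos: "\<And>i. 0 < \<alpha> $ i"
begin

definition E :: "real^'nz^'nx" where "E = P ** transpose H ** inv_sqrt R ** V"

definition Ft :: "real^'nx^'nz" where "Ft = transpose V ** inv_sqrt R ** H"

definition resolvent :: "real \<Rightarrow> real^'nz^'nz" where
  "resolvent l = diag_mat (\<chi> i. 1 / (1 + l * \<alpha> $ i))"

lemma orthogonal_V_cancel [simp]:
  "V *v (transpose V *v y) = y" "transpose V *v (V *v y) = y"
  using orthogonal_V by (simp_all add: matrix_vector_mul_assoc orthogonal_matrix_def)

lemma spd_sqrt_R_cancel [simp]:
  "spd_sqrt R *v (inv_sqrt R *v y) = y" "inv_sqrt R *v (spd_sqrt R *v y) = y"
  by (simp_all add: matrix_vector_mul_assoc spd_sqrt_mult_inv_sqrt[OF spd_R]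
      inv_sqrt_mult_spd_sqrt[OF spd_R])

lemma E_mult: "E *v y = P *v (transpose H *v (inv_sqrt R *v (V *v y)))"
  by (simp add: E_def matrix_vector_mul_assoc[symmetric])

lemma Ft_mult: "Ft *v y = transpose V *v (inv_sqrt R *v (H *v y))"
  by (simp add: Ft_def matrix_vector_mul_assoc[symmetric])

lemma whitened_cov_mult:
  "inv_sqrt R *v (H *v (P *v (transpose H *v (inv_sqrt R *v y))))
     = V *v (diag_mat \<alpha> *v (transpose V *v y))"
  using arg_cong[OF eigendecomposition, of "\<lambda>M. M *v y"] by (simp add: matrix_vector_mul_assoc[symmetric])

lemma Ft_E_mult: "Ft *v (E *v y) = diag_mat \<alpha> *v y"
  unfolding Ft_mult E_mult whitened_cov_mult by simp

lemma cov_mult: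
  "H *v (P *v (transpose H *v y))
     = spd_sqrt R *v (V *v (diag_mat \<alpha> *v (transpose V *v (spd_sqrt R *v y))))"
  using arg_cong[OF whitened_cov_mult[of "spd_sqrt R *v y"], of "\<lambda>v. spd_sqrt R *v v"] by simp

lemma one_plus_eigenvalue_nonzero:
  assumes "0 \<le> l"
  shows "1 + l * \<alpha> $ i \<noteq> 0"
proof -
  have "0 < 1 + l * \<alpha> $ i"
    using eigenvalues_pos[of i] assms by (intro add_pos_nonneg) simp_all
  then show ?thesis by simp
qed

lemma resolvent_shift:
  assumes "0 \<le> l"
  shows "l *\<^sub>R (diag_mat \<alpha> *v (resolvent l *v u)) + resolvent l *v u = u"
proof -
  have "l * (\<alpha> $ i * (1 / (1 + l * \<alpha> $ i) * u $ i)) + 1 / (1 + l * \<alpha> $ i) * u $ i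
      = (1 + l * \<alpha> $ i) * (1 / (1 + l * \<alpha> $ i) * u $ i)" for i
    by (simp add: algebra_simps add_divide_distrib)
  also have "(1 + l * \<alpha> $ i) * (1 / (1 + l * \<alpha> $ i) * u $ i) = u $ i" for i
    using one_plus_eigenvalue_nonzero[OF assms, of i] by simp
  finally show ?thesis by (simp add: resolvent_def vec_eq_iff)
qed

lemma matrix_inv_innovation_cov:
  assumes "0 \<le> l"
  shows "matrix_inv (l *\<^sub>R (H ** P ** transpose H) + R)
           = inv_sqrt R ** V ** resolvent l ** transpose V ** inv_sqrt R"
proof (rule matrix_inv_eqI, rule iffD2[OF matrix_eq], rule allI)
  fix v
  define u where "u = transpose V *v (inv_sqrt R *v v)"
  have R_mult: "R *v y = spd_sqrt R *v (spd_sqrt R *v y)" for y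
    by (simp add: matrix_vector_mul_assoc spd_sqrt_mult_self[OF spd_R])
  have "(l *\<^sub>R (H ** P ** transpose H) + R) *v (inv_sqrt R *v (V *v (resolvent l *v u)))
      = spd_sqrt R *v (V *v (l *\<^sub>R (diag_mat \<alpha> *v (resolvent l *v u)) + resolvent l *v u))"
    by (simp add: matrix_vector_mult_add_rdistrib scaleR_matrix_vector_assoc[symmetric]
        matrix_vector_mul_assoc[symmetric] cov_mult R_mult matrix_vector_mult_scaleR
        matrix_vector_right_distrib)
  also have "\<dots> = spd_sqrt R *v (V *v u)" by (simp only: resolvent_shift[OF assms])
  finally show "((l *\<^sub>R (H ** P ** transpose H) + R)
      ** (inv_sqrt R ** V ** resolvent l ** transpose V ** inv_sqrt R)) *v v = mat 1 *v v"
    by (simp add: matrix_vector_mul_assoc[symmetric] u_def)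
qed

lemma EDH_A_eq:
  assumes "0 \<le> l"
  shows "EDH_A P R H l = (- (1/2)) *\<^sub>R (E ** resolvent l ** Ft)"
  by (simp add: EDH_A_def matrix_inv_innovation_cov[OF assms] E_def Ft_def matrix_mul_assoc)

lemma EDH_A_mult:
  assumes "0 \<le> l"
  shows "EDH_A P R H l *v y = (- (1/2)) *\<^sub>R (E *v (resolvent l *v (Ft *v y)))"
  by (simp only: EDH_A_eq[OF assms] scaleR_matrix_vector_assoc matrix_vector_mul_assoc
      matrix_mul_assoc)

lemma E_mult_gain: "P *v (transpose H *v (matrix_inv R *v y)) = E *v (transpose V *v (inv_sqrt R *v y))"
  by (simp add: E_mult matrix_inv_eq_inv_sqrt_square[OF spd_R] matrix_vector_mul_assoc[symmetric])

lemma EDH_A_mult_E: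
  assumes "0 \<le> l"
  shows "EDH_A P R H l *v (E *v y) = (- (1/2)) *\<^sub>R (E *v (resolvent l *v (diag_mat \<alpha> *v y)))"
  by (simp only: EDH_A_mult[OF assms] Ft_E_mult)

definition omega :: "real^'nz" where "omega = (\<chi> i. (1 / sqrt (1 + \<alpha> $ i) - 1) / \<alpha> $ i)"

end

locale edh_flow = edh_eigencoordinates P R H V \<alpha>
  for P :: "real^'nx^'nx" and R :: "real^'nz^'nz" and H :: "real^'nx^'nz"
    and V :: "real^'nz^'nz" and \<alpha> :: "real^'nz" +
  fixes xbar :: "real^'nx" and z :: "real^'nz"
begin

definition zt :: "real^'nz" where "zt = transpose V ** inv_sqrt R *v z"

definition xt :: "real^'nz" where "xt = Ft *v xbar"

definition beta :: "real \<Rightarrow> real^'nz" where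
  "beta l = (\<chi> i. (zt $ i * (1 + l * \<alpha> $ i / 2) - xt $ i / 2) / (1 + l * \<alpha> $ i)\<^sup>2)"

definition c :: "real^'nz" where
  "c = (\<chi> i. (\<alpha> $ i * zt $ i + xt $ i * (1 - sqrt (1 + \<alpha> $ i))) / (\<alpha> $ i * (1 + \<alpha> $ i)))"

lemma EDH_b_eq:
  assumes l: "0 \<le> l"
  shows "EDH_b P R H xbar z l = E *v beta l"
proof -
  let ?A = "EDH_A P R H l" and ?D = "resolvent l" and ?\<Lambda> = "diag_mat \<alpha>"
  have one_plus: "(mat 1 + k *\<^sub>R ?A) *v v = v + k *\<^sub>R (?A *v v)" for k v
    by (simp add: matrix_vector_mult_add_rdistrib scaleR_matrix_vector_assoc)
  define \<gamma> where "\<gamma> = zt - (l / 2) *\<^sub>R (?D *v (?\<Lambda> *v zt)) - (1 / 2) *\<^sub>R (?D *v xt)"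
  have "(mat 1 + l *\<^sub>R ?A) ** P ** transpose H ** matrix_inv R *v z + ?A *v xbar = E *v \<gamma>"
    by (simp add: matrix_vector_mul_assoc[symmetric] one_plus E_mult_gain Ft_E_mult
        EDH_A_mult[OF l] \<gamma>_def zt_def xt_def matrix_vector_mult_diff_distrib matrix_vector_mult_scaleR
        del: diag_mat_mult_vec)
  moreover have "(mat 1 + (2 * l) *\<^sub>R ?A) *v (E *v \<gamma>) = E *v (\<gamma> - l *\<^sub>R (?D *v (?\<Lambda> *v \<gamma>)))"
    by (simp add: one_plus EDH_A_mult_E[OF l] matrix_vector_mult_diff_distrib matrix_vector_mult_scaleR
        del: diag_mat_mult_vec)
  moreover have "\<gamma> - l *\<^sub>R (?D *v (?\<Lambda> *v \<gamma>)) = beta l"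
  proof -
    have "\<gamma> $ i - l * (1 / (1 + l * \<alpha> $ i) * (\<alpha> $ i * \<gamma> $ i)) = beta l $ i" for i
    proof -
      have d: "1 + l * \<alpha> $ i \<noteq> 0" by (rule one_plus_eigenvalue_nonzero[OF l])
      have "\<gamma> $ i = zt $ i - l / 2 * (\<alpha> $ i * zt $ i / (1 + l * \<alpha> $ i))
                      - xt $ i / (2 * (1 + l * \<alpha> $ i))"
        by (simp add: \<gamma>_def resolvent_def)
      also have "\<dots> = (zt $ i * (1 + l * \<alpha> $ i / 2) - xt $ i / 2) / (1 + l * \<alpha> $ i)"
        using d by (simp add: divide_simps) (simp add: algebra_simps)
      finally have \<gamma>: "\<gamma> $ i = (zt $ i * (1 + l * \<alpha> $ i / 2) - xt $ i / 2) / (1 + l * \<alpha> $ i)" .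
      have "\<gamma> $ i - l * (1 / (1 + l * \<alpha> $ i) * (\<alpha> $ i * \<gamma> $ i)) = \<gamma> $ i / (1 + l * \<alpha> $ i)"
        using d by (simp add: field_simps)
      then show ?thesis unfolding \<gamma> by (simp add: beta_def power2_eq_square)
    qed
    then show ?thesis by (simp add: vec_eq_iff resolvent_def)
  qed
  ultimately show ?thesis by (simp add: EDH_b_def)
qed

lemma EDH_field_eq:
  assumes "0 \<le> l"
  shows "EDH_A P R H l *v y + EDH_b P R H xbar z l
           = E *v ((- (1/2)) *\<^sub>R (resolvent l *v (Ft *v y)) + beta l)"
  by (simp add: EDH_A_mult[OF assms] EDH_b_eq[OF assms] matrix_vector_right_distrib
      matrix_vector_mult_diff_distrib matrix_vector_mult_scaleR del: diag_mat_mult_vec)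

context
  fixes x :: "real \<Rightarrow> real^'nx"
  assumes ode: "\<forall>l\<in>{0..1}. (x has_vector_derivative
                  (EDH_A P R H l *v x l + EDH_b P R H xbar z l)) (at l within {0..1})"
begin

lemma solution_has_derivative_in_range:
  assumes "l \<in> {0..1}"
  shows "(x has_vector_derivative E *v ((- (1/2)) *\<^sub>R (resolvent l *v (Ft *v x l)) + beta l))
           (at l within {0..1})"
proof -
  have "(x has_vector_derivative EDH_A P R H l *v x l + EDH_b P R H xbar z l) (at l within {0..1})"
    using ode assms by blast
  moreover have "0 \<le> l" using assms by simp
  ultimately show ?thesis by (simp only: EDH_field_eq)
qed

lemma solution_coordinate_has_derivative:
  assumes l: "l \<in> {0..1}"
  shows "((\<lambda>l. (Ft *v x l) $ i) has_real_derivative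
           \<alpha> $ i * ((zt $ i * (1 + l * \<alpha> $ i / 2) - xt $ i / 2) / (1 + l * \<alpha> $ i)\<^sup>2
                    - (Ft *v x l) $ i / (2 * (1 + l * \<alpha> $ i))))
         (at l within {0..1})"
proof -
  have "((\<lambda>l. (Ft *v x l) $ i) has_vector_derivative
          (Ft *v (E *v ((- (1/2)) *\<^sub>R (resolvent l *v (Ft *v x l)) + beta l))) $ i) (at l within {0..1})"
    by (intro bounded_linear.has_vector_derivative[OF bounded_linear_vec_nth]
        bounded_linear.has_vector_derivative[OF matrix_vector_mul_bounded_linear]
        solution_has_derivative_in_range l)
  moreover have "(Ft *v (E *v ((- (1/2)) *\<^sub>R (resolvent l *v (Ft *v x l)) + beta l))) $ i
      = \<alpha> $ i * ((zt $ i * (1 + l * \<alpha> $ i / 2) - xt $ i / 2) / (1 + l * \<alpha> $ i)\<^sup>2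
                    - (Ft *v x l) $ i / (2 * (1 + l * \<alpha> $ i)))"
    by (simp add: Ft_E_mult resolvent_def beta_def)
  ultimately show ?thesis by (simp add: has_real_derivative_iff_has_vector_derivative)
qed

lemma EDH_flow_endpoint: "x 1 = (mat 1 + E ** diag_mat omega ** Ft) *v x 0 + E *v c"
proof -
  define L where "L = diag_mat (\<chi> i. 1 / \<alpha> $ i) ** Ft"
  have "L ** E = mat 1"
    using eigenvalues_pos[THEN less_imp_neq, THEN not_sym]
    by (simp add: matrix_eq L_def matrix_vector_mul_assoc[symmetric] Ft_E_mult vec_eq_iff)
  then have "x 1 - x 0 = E *v (L *v (x 1 - x 0))"
    by (rule has_vector_derivative_increment_in_range) (auto intro: solution_has_derivative_in_range)
  also have "L *v (x 1 - x 0) = diag_mat omega *v (Ft *v x 0) + c"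
  proof -
    have "((Ft *v x 1) $ i - (Ft *v x 0) $ i) / \<alpha> $ i = omega $ i * (Ft *v x 0) $ i + c $ i" for i
      using edh_scalar_endpoint[OF eigenvalues_pos solution_coordinate_has_derivative]
      by (simp add: omega_def c_def)
    then show ?thesis
      by (simp add: L_def matrix_vector_mul_assoc[symmetric] matrix_vector_mult_diff_distrib vec_eq_iff
          diff_divide_distrib[symmetric])
  qed
  finally show ?thesis
    by (simp add: matrix_vector_mult_add_rdistrib matrix_vector_right_distrib
        matrix_vector_mul_assoc[symmetric] algebra_simps del: diag_mat_mult_vec)
qed

end

end

theorem mainTheorem3:
  fixes P :: "real^'nx^'nx" and R :: "real^'nz^'nz" and H :: "real^'nx^'nz"
    and xbar x0 :: "real^'nx" and z :: "real^'nz"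
    and V :: "real^'nz^'nz" and \<alpha> :: "real^'nz"
    and x :: "real \<Rightarrow> real^'nx"
  assumes P: "spd P" and R: "spd R" and H: "rank H = CARD('nz)"
    and V: "orthogonal_matrix V"
    and eig: "inv_sqrt R ** H ** P ** transpose H ** inv_sqrt R
              = V ** diag_mat \<alpha> ** transpose V"
    and apos: "\<forall>i. 0 < \<alpha> $ i"
    and ode: "\<forall>l\<in>{0..1}. (x has_vector_derivative
                 (EDH_A P R H l *v x l + EDH_b P R H xbar z l)) (at l within {0..1})"
    and init: "x 0 = x0"
  shows "let E = P ** transpose H ** inv_sqrt R ** V;
             Ft = transpose V ** inv_sqrt R ** H;
             zt = transpose V ** inv_sqrt R *v z;
             xt = Ft *v xbar;
             \<omega> = (\<chi> i. (1 / sqrt (1 + \<alpha> $ i) - 1) / \<alpha> $ i);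
             c = (\<chi> i. (\<alpha> $ i * zt $ i + xt $ i * (1 - sqrt (1 + \<alpha> $ i)))
                        / (\<alpha> $ i * (1 + \<alpha> $ i)));
             \<beta> = (\<lambda>\<mu>. \<chi> i. (zt $ i * (1 + \<mu> * \<alpha> $ i / 2) - xt $ i / 2)
                        / (1 + \<mu> * \<alpha> $ i)\<^sup>2)
         in x 1 = (mat 1 + E ** diag_mat \<omega> ** Ft) *v x0 + E *v c
            \<and> (\<forall>\<mu>\<in>{0..1}. EDH_b P R H xbar z \<mu> = E *v \<beta> \<mu>)"
proof -
  \<comment> \<open>P and H enter only through the eigenvalues; their positivity is assumed directly\<close>
  interpret edh_flow P R H V \<alpha> xbar z
    using R V eig apos by unfold_locales auto
  have "x 1 = (mat 1 + E ** diag_mat omega ** Ft) *v x0 + E *v c"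
    using EDH_flow_endpoint[OF ode] init by simp
  moreover have "\<forall>\<mu>\<in>{0..1}. EDH_b P R H xbar z \<mu> = E *v beta \<mu>"
    using EDH_b_eq by simp
  ultimately show ?thesis
    unfolding Let_def E_def Ft_def zt_def xt_def omega_def c_def beta_def by (rule conjI)
qed

end
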